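(* Let $p$ be a prime and let $H(X)=\prod_{j=0}^{p-1}G_p(X-j)$ (which equals $\prod_{i=0}^{p^2-1}(X-i)$). Then for each $k\in\{0,\dots,p-1\}$, $$H(X)\equiv -G_p(X-k)\pmod{(p,X-k)^{p+1}}.$$
   Context: $G_p(X)=\prod_{h=0}^{p-1}(X-hp)$. *)

theory Defs
  imports "HOL-Computational_Algebra.Polynomial"
begin

definition G :: "nat \<Rightarrow> int poly" where
  "G p = (\<Prod>h<p. [:- (int h * int p), 1:])"

text \<open>Membership in the ideal (c, X - k)^n of Z[X]: the n-th power of the ideal
  generated by c and X - k is generated by the products c^i (X-k)^(n-i), i = 0..n.\<close>
definition in_ideal_pow :: "int poly \<Rightarrow> int \<Rightarrow> int \<Rightarrow> nat \<Rightarrow> bool" where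
  "in_ideal_pow f c k n \<longleftrightarrow>
     (\<exists>g :: nat \<Rightarrow> int poly. f = (\<Sum>i\<le>n. smult (c ^ i) ([:- k, 1:] ^ (n - i)) * g i))"

end

theory Submission
  imports Defs "HOL-Number_Theory.Number_Theory"
begin

text \<open>Write \<open>I = (p, X - k)\<close>. Since \<open>G\<^sub>p(X - k) = \<Prod>\<^sub>h ((X - k) - h p)\<close> is a product of \<open>p\<close>
  elements of \<open>I\<close>, it lies in \<open>I\<^sup>p\<close>. The difference \<open>H + G\<^sub>p(X - k)\<close> factors as
  \<open>G\<^sub>p(X - k) (Q + 1)\<close> with \<open>Q = \<Prod>\<^sub>j\<^sub>\<noteq>\<^sub>k G\<^sub>p(X - j)\<close>, so it suffices that \<open>Q + 1 \<in> I\<close>, i.e.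
  \<open>Q(k) \<equiv> -1 (mod p)\<close>. Modulo \<open>p\<close>, \<open>G\<^sub>p(x) \<equiv> x\<^sup>p\<close>, hence
  \<open>Q(k) \<equiv> (\<Prod>\<^sub>j\<^sub>\<noteq>\<^sub>k (k - j))\<^sup>p\<close>, and the inner product is \<open>\<equiv> (p - 1)! \<equiv> -1\<close> by Wilson's theorem.\<close>

lemma in_ideal_pow_0: "in_ideal_pow f c k 0"
  unfolding in_ideal_pow_def by (rule exI[of _ "\<lambda>_. f"]) simp

lemma in_ideal_pow_mult_generators:
  assumes "in_ideal_pow a c k n"
  shows "in_ideal_pow (a * ([:- k, 1:] * u + Polynomial.smult c v)) c k (Suc n)"
proof -
  define Y where "Y = [:- k, 1:]"
  obtain g where g: "a = (\<Sum>i\<le>n. Polynomial.smult (c ^ i) (Y ^ (n - i)) * g i)"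
    using assms unfolding in_ideal_pow_def Y_def by blast
  define gu where "gu i = (if i \<le> n then g i * u else 0)" for i
  define gv where "gv i = (if i = 0 then 0 else g (i - 1) * v)" for i
  have Y_part: "a * (Y * u) = (\<Sum>i\<le>Suc n. Polynomial.smult (c ^ i) (Y ^ (Suc n - i)) * gu i)"
    unfolding g sum_distrib_right by (simp add: gu_def Suc_diff_le mult_ac)
  have c_part: "a * Polynomial.smult c v =
      (\<Sum>i\<le>Suc n. Polynomial.smult (c ^ i) (Y ^ (Suc n - i)) * gv i)"
    unfolding g sum_distrib_right sum.atMost_Suc_shift by (simp add: gv_def mult_ac)
  have expansion: "a * (Y * u + Polynomial.smult c v) =
      (\<Sum>i\<le>Suc n. Polynomial.smult (c ^ i) (Y ^ (Suc n - i)) * (gu i + gv i))"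
    by (simp only: distrib_left Y_part c_part sum.distrib)
  show ?thesis
    unfolding in_ideal_pow_def Y_def[symmetric] by (rule exI, rule expansion)
qed

lemma in_ideal_pow_prod_generators:
  "in_ideal_pow (\<Prod>h<m. [:- k, 1:] * u h + Polynomial.smult c (v h)) c k m"
proof (induction m)
  case 0
  show ?case by (rule in_ideal_pow_0)
next
  case (Suc m)
  then show ?case
    by (simp only: prod.lessThan_Suc in_ideal_pow_mult_generators)
qed

lemma poly_root_mod_imp_generators:
  fixes f :: "int poly"
  assumes "[poly f k = 0] (mod c)"
  obtains u v where "f = [:- k, 1:] * u + Polynomial.smult c v"
proof -
  obtain t where t: "poly f k = c * t"
    using assms by (auto simp: cong_0_iff)
  have "poly (f - [:c * t:]) k = 0"
    by (simp add: t)
  then have "[:- k, 1:] dvd f - [:c * t:]"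
    by (simp only: poly_eq_0_iff_dvd)
  then obtain u where "f - [:c * t:] = [:- k, 1:] * u"
    by (elim dvdE)
  then have "f = [:- k, 1:] * u + Polynomial.smult c [:t:]"
    by (simp add: algebra_simps)
  then show ?thesis by (rule that)
qed

lemma pcompose_G_as_prod_generators:
  "pcompose (G p) [:- int k, 1:] =
     (\<Prod>h<p. [:- int k, 1:] * 1 + Polynomial.smult (int p) [:- int h:])"
  unfolding G_def pcompose_prod
  by (intro prod.cong refl) (simp add: pcompose_pCons algebra_simps)

lemma poly_G_cong_power: "[poly (G p) x = x ^ p] (mod int p)"
proof -
  have "[(\<Prod>h<p. x - int h * int p) = (\<Prod>h<p. x)] (mod int p)"
    by (rule cong_prod) (simp add: cong_iff_dvd_diff)
  then show ?thesis
    by (simp add: G_def poly_prod)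
qed

lemma prod_diff_cong_minus_one:
  assumes "prime p" "k < p"
  shows "[(\<Prod>j\<in>{..<p} - {k}. int k - int j) = -1] (mod int p)"
proof -
  define S where "S = {..<p} - {k}"
  \<comment> \<open>\<open>j \<mapsto> (k - j) mod p\<close>, a bijection onto \<open>{1..p-1}\<close>\<close>
  define r where "r j = (if j \<le> k then k - j else k + p - j)" for j
  have "inj_on r S"
    unfolding inj_on_def S_def r_def by auto
  moreover have "r ` S \<subseteq> {1..p - 1}"
    using assms(2) unfolding S_def r_def by (auto split: if_splits)
  moreover have "card S = card {1..p - 1}"
    using assms(2) unfolding S_def by simp
  ultimately have r_image: "r ` S = {1..p - 1}"
    by (metis card_image card_subset_eq finite_atLeastAtMost)
  have "[(\<Prod>j\<in>S. int k - int j) = (\<Prod>j\<in>S. int (r j))] (mod int p)"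
  proof (rule cong_prod)
    fix j assume "j \<in> S"
    then have "j < p" by (simp add: S_def)
    then have "int (r j) = int k - int j \<or> int (r j) = int k - int j + int p"
      by (auto simp: r_def of_nat_diff)
    then show "[int k - int j = int (r j)] (mod int p)"
      by (auto simp: cong_def)
  qed
  also have "(\<Prod>j\<in>S. int (r j)) = (\<Prod>i\<in>r ` S. int i)"
    using \<open>inj_on r S\<close> by (simp add: prod.reindex)
  also have "\<dots> = fact (p - 1)"
    by (simp add: r_image fact_prod)
  also have "[\<dots> = -1] (mod int p)"
    by (rule wilson_theorem[OF assms(1)])
  finally show ?thesis
    unfolding S_def .
qed

lemma prime_neg_one_power_cong:
  assumes "prime (p :: nat)"
  shows "[(-1 :: int) ^ p = -1] (mod int p)"
proof (cases "p = 2")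
  case True
  then show ?thesis by (simp add: cong_def)
next
  case False
  then have "odd p"
    using assms prime_odd_nat prime_ge_2_nat[OF assms] by fastforce
  then show ?thesis by simp
qed

theorem mainTheorem17:
  fixes p k :: nat
  assumes "prime p" and "k < p"
  shows "in_ideal_pow
           ((\<Prod>j<p. pcompose (G p) [:- int j, 1:]) - (- pcompose (G p) [:- int k, 1:]))
           (int p) (int k) (p + 1)"
proof -
  define F where "F j = pcompose (G p) [:- int j, 1:]" for j
  define Q where "Q = (\<Prod>j\<in>{..<p} - {k}. F j)"
  have "[poly Q (int k) = (\<Prod>j\<in>{..<p} - {k}. (int k - int j) ^ p)] (mod int p)"
    unfolding Q_def F_def poly_prod poly_pcompose
    by (rule cong_prod) (simp add: poly_G_cong_power)
  also have "[(\<Prod>j\<in>{..<p} - {k}. (int k - int j) ^ p) = (-1) ^ p] (mod int p)"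
    unfolding prod_power_distrib[symmetric] by (intro cong_pow prod_diff_cong_minus_one assms)
  also have "[(-1) ^ p = -1] (mod int p)"
    by (rule prime_neg_one_power_cong[OF assms(1)])
  finally have "[poly (Q + 1) (int k) = 0] (mod int p)"
    by (simp add: cong_iff_dvd_diff)
  then obtain u v where Q1: "Q + 1 = [:- int k, 1:] * u + Polynomial.smult (int p) v"
    by (rule poly_root_mod_imp_generators)
  have factor: "(\<Prod>j<p. F j) - - F k = F k * (Q + 1)"
    using assms(2) by (simp add: Q_def prod.remove algebra_simps)
  have "in_ideal_pow (F k) (int p) (int k) p"
    unfolding F_def pcompose_G_as_prod_generators by (rule in_ideal_pow_prod_generators)
  then show ?thesis
    unfolding F_def[symmetric] factor Q1 Suc_eq_plus1[symmetric]
    by (rule in_ideal_pow_mult_generators)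
qed

end
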